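(* Let $\mathcal{H}_A,\mathcal{H}_B$ be finite-dimensional Hilbert spaces, let $Q_A$ and $Q_B$ be Hermitian operators on $\mathcal{H}_A$ and $\mathcal{H}_B$ respectively, and let $O\neq 0$ be an operator on $\mathcal{H}_A\otimes\mathcal{H}_B$ satisfying $[Q_A\otimes\mathbb{1}+\mathbb{1}\otimes Q_B,\,O]=0$. Then there exists a symmetry-resolved operator Schmidt decomposition $$\frac{O}{\sqrt{\mathrm{Tr}(O^\dagger O)}}=\sum_q\sum_j\lambda_j^{(q)}\,O_{A,j}^{(q)}\otimes O_{B,j}^{(-q)},$$ where $q$ ranges over eigenvalues of the linear map $X\mapsto[Q_A,X]$ on $\mathrm{End}(\mathcal{H}_A)$, $\lambda_j^{(q)}\ge0$, $\mathrm{Tr}\big((O_{A,j}^{(q)})^\dagger O_{A,j'}^{(q')}\big)=\delta_{q,q'}\delta_{j,j'}$, $\mathrm{Tr}\big((O_{B,j}^{(q)})^\dagger O_{B,j'}^{(q')}\big)=\delta_{q,q'}\delta_{j,j'}$, and $[Q_A,O_{A,j}^{(q)}]=q\,O_{A,j}^{(q)}$, $[Q_B,O_{B,j}^{(q)}]=q\,O_{B,j}^{(q)}$. *)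

theory Defs
  imports "HOL-Analysis.Analysis"
begin

text \<open>Operators on a finite-dimensional Hilbert space with orthonormal basis indexed by
  the finite type 'a are complex matrices of type complex^'a^'a.\<close>

type_synonym 'a op = "complex^'a^'a"

definition adj :: "'a::finite op \<Rightarrow> 'a op" where
  "adj A = (\<chi> i j. cnj (A $ j $ i))"

definition hermitian :: "'a::finite op \<Rightarrow> bool" where
  "hermitian A \<longleftrightarrow> adj A = A"

definition cscale :: "complex \<Rightarrow> 'a::finite op \<Rightarrow> 'a op" where
  "cscale c A = (\<chi> i j. c * A $ i $ j)"

definition commutator :: "'a::finite op \<Rightarrow> 'a op \<Rightarrow> 'a op" where
  "commutator X Y = X ** Y - Y ** X"

text \<open>Tensor (Kronecker) product: H_A \<otimes> H_B has basis indexed by 'a \<times> 'b.\<close>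
definition kron :: "'a::finite op \<Rightarrow> 'b::finite op \<Rightarrow> ('a \<times> 'b) op" where
  "kron A B = (\<chi> r c. A $ fst r $ fst c * B $ snd r $ snd c)"

definition ad_eigenvalue :: "'a::finite op \<Rightarrow> complex \<Rightarrow> bool" where
  "ad_eigenvalue Q q \<longleftrightarrow> (\<exists>X. X \<noteq> 0 \<and> commutator Q X = cscale q X)"

end

(* Contracting W against an operator Y on H_B gives the operator contract W Y on H_A.
   The symmetry [Q_A (x) 1 + 1 (x) Q_B, W] = 0 makes contraction intertwine the adjoint
   actions: [Q_A, contract W Y] = - contract W [Q_B^T, Y].  Hence the positive map
   M = contract_adj W o contract W commutes with the self-adjoint map L = [Q_B^T, -], and
   the two have a common Hilbert-Schmidt orthonormal eigenbasis (g).  Expanding W in the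
   basis (cnj g) of the B factor gives W = sum_g contract W g (x) cnj g, where the A factors
   are mutually orthogonal because the g are eigenvectors of M, and an L-eigenvalue p of g
   makes contract W g a [Q_A, -]-eigenvector with eigenvalue -p and cnj g a
   [Q_B, -]-eigenvector with eigenvalue p.  Normalising the nonzero A factors yields the
   Schmidt coefficients. *)

theory Submission
  imports Defs
begin

section \<open>Eigenvectors of self-adjoint maps\<close>

lemma linear_le_quadratic_imp_zero:
  fixes a D :: real
  assumes "\<And>t. 2 * t * a \<le> t\<^sup>2 * D"
  shows "a = 0"
proof (rule ccontr)
  assume "a \<noteq> 0"
  define e where "e = 1 / (\<bar>D\<bar> + 1)"
  have e: "e > 0" "e * D < 1"
    unfolding e_def by (simp_all add: divide_less_eq abs_if)
  have "2 * (e * a) * a \<le> (e * a)\<^sup>2 * D" by (rule assms)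
  hence "2 * (e * a\<^sup>2) \<le> (e * D) * (e * a\<^sup>2)" by (simp add: power2_eq_square algebra_simps)
  moreover have "e * a\<^sup>2 > 0" using e \<open>a \<noteq> 0\<close> by simp
  ultimately show False using e(2)
    by (smt (verit) mult_less_cancel_right2)
qed

lemma rayleigh_maximizer_is_eigenvector:
  fixes f :: "'v::real_inner \<Rightarrow> 'v"
  assumes "subspace S" and "f ` S \<subseteq> S" and "linear f"
    and sym: "\<And>x y. inner x (f y) = inner (f x) y"
    and "x \<in> S" and maximal: "\<And>z. z \<in> S \<Longrightarrow> inner z (f z) \<le> c * inner z z"
    and attained: "inner x (f x) = c * inner x x"
  shows "f x = c *\<^sub>R x"
proof -
  define y where "y = f x - c *\<^sub>R x"
  \<comment> \<open>Comparing the Rayleigh quotient at x and at x + t y shows that y vanishes.\<close>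
  have "y \<in> S" unfolding y_def using assms by (auto intro: subspace_diff subspace_scale)
  have "2 * t * inner y y \<le> t\<^sup>2 * (c * inner y y - inner y (f y))" for t
  proof -
    have "x + t *\<^sub>R y \<in> S" using assms \<open>y \<in> S\<close> by (auto intro: subspace_add subspace_scale)
    hence le: "inner (x + t *\<^sub>R y) (f (x + t *\<^sub>R y)) \<le> c * inner (x + t *\<^sub>R y) (x + t *\<^sub>R y)"
      by (rule maximal)
    have "inner (x + t *\<^sub>R y) (f (x + t *\<^sub>R y))
        = inner x (f x) + 2 * t * inner y (f x) + t\<^sup>2 * inner y (f y)"
      using \<open>linear f\<close> sym[of x y]
      by (simp add: linear_add linear_cmul inner_add_left inner_add_right power2_eq_square
          inner_commute[of y "f x"] algebra_simps)
    moreover have "inner (x + t *\<^sub>R y) (x + t *\<^sub>R y) = inner x x + 2 * t * inner y x + t\<^sup>2 * inner y y"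
      by (simp add: inner_add_left inner_add_right power2_eq_square inner_commute[of x y] algebra_simps)
    moreover have "inner y (f x) - c * inner y x = inner y y"
      by (metis inner_diff_right inner_scaleR_right y_def)
    ultimately show ?thesis using le attained by (simp add: algebra_simps)
  qed
  hence "inner y y = 0" by (rule linear_le_quadratic_imp_zero)
  thus ?thesis unfolding y_def by simp
qed

lemma selfadjoint_eigenvector_in_invariant_subspace:
  fixes f :: "'v::euclidean_space \<Rightarrow> 'v"
  assumes S: "subspace S" "S \<noteq> {0}" "f ` S \<subseteq> S" and f: "linear f"
    and sym: "\<And>x y. inner x (f y) = inner (f x) y"
  shows "\<exists>x\<in>S. norm x = 1 \<and> (\<exists>c. f x = c *\<^sub>R x)"
proof -
  define K where "K = S \<inter> sphere 0 1"
  have "compact K"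
    unfolding K_def using closed_subspace[OF S(1)] by (simp add: closed_Int_compact)
  obtain y where "y \<in> S" "y \<noteq> 0" using S subspace_0 by blast
  hence "y /\<^sub>R norm y \<in> K" unfolding K_def using S by (simp add: subspace_scale)
  hence "K \<noteq> {}" by blast
  moreover have "continuous_on K (\<lambda>x. inner x (f x))"
    using f by (intro continuous_intros linear_continuous_on linear_conv_bounded_linear[THEN iffD1])
  ultimately obtain x where "x \<in> K" and xmax: "\<And>z. z \<in> K \<Longrightarrow> inner z (f z) \<le> inner x (f x)"
    using continuous_attains_sup[OF \<open>compact K\<close>] by blast
  hence "x \<in> S" "norm x = 1" unfolding K_def by auto
  define c where "c = inner x (f x)"
  have "inner z (f z) \<le> c * inner z z" if "z \<in> S" for z
  proof (cases "z = 0")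
    case False
    hence "z /\<^sub>R norm z \<in> K" unfolding K_def using S \<open>z \<in> S\<close> by (simp add: subspace_scale)
    from xmax[OF this] have "inner z (f z) / (norm z)\<^sup>2 \<le> c"
      using f unfolding c_def by (simp add: linear_cmul power2_eq_square field_simps)
    thus ?thesis using False by (simp add: divide_le_eq dot_square_norm mult.commute)
  qed (use f linear_0 in simp)
  moreover have "inner x (f x) = c * inner x x"
    using \<open>norm x = 1\<close> unfolding c_def by (simp add: dot_square_norm)
  ultimately have "f x = c *\<^sub>R x"
    using rayleigh_maximizer_is_eigenvector[OF S(1,3) f sym \<open>x \<in> S\<close>] by blast
  thus ?thesis using \<open>x \<in> S\<close> \<open>norm x = 1\<close> by blast
qed

lemma commuting_selfadjoint_common_eigenvector:
  fixes f g :: "'v::euclidean_space \<Rightarrow> 'v"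
  assumes S: "subspace S" "S \<noteq> {0}" "f ` S \<subseteq> S" "g ` S \<subseteq> S"
    and f: "linear f" "\<And>x y. inner x (f y) = inner (f x) y"
    and g: "linear g" "\<And>x y. inner x (g y) = inner (g x) y"
    and comm: "\<And>x. f (g x) = g (f x)"
  shows "\<exists>x\<in>S. norm x = 1 \<and> (\<exists>a. f x = a *\<^sub>R x) \<and> (\<exists>b. g x = b *\<^sub>R x)"
proof -
  obtain x0 a where "x0 \<in> S" "norm x0 = 1" "f x0 = a *\<^sub>R x0"
    using selfadjoint_eigenvector_in_invariant_subspace[OF S(1-3) f] by blast
  define E where "E = {y \<in> S. f y = a *\<^sub>R y}"
  have "subspace E"
    unfolding E_def subspace_def using S(1) f(1)
    by (auto simp: subspace_add subspace_scale subspace_0 linear_add linear_cmul linear_0 scaleR_add_right)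
  moreover have "E \<noteq> {0}"
  proof -
    have "x0 \<in> E" unfolding E_def using \<open>x0 \<in> S\<close> \<open>f x0 = a *\<^sub>R x0\<close> by blast
    moreover have "x0 \<noteq> 0" using \<open>norm x0 = 1\<close> by auto
    ultimately show ?thesis by blast
  qed
  moreover have "g ` E \<subseteq> E" unfolding E_def using S(4) comm g(1) by (auto simp: linear_cmul)
  ultimately obtain x b where "x \<in> E" "norm x = 1" "g x = b *\<^sub>R x"
    using selfadjoint_eigenvector_in_invariant_subspace[OF _ _ _ g] by blast
  thus ?thesis unfolding E_def by blast
qed

lemma cscale_nth [simp]: "cscale c X $ i $ j = c * X $ i $ j"
  by (simp add: cscale_def)

lemma scaleR_op_nth: "(r *\<^sub>R X) $ i $ j = of_real r * (X :: 'n::finite op) $ i $ j"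
  unfolding vector_scaleR_component by (simp add: scaleR_conv_of_real)

lemma scaleR_eq_cscale: "r *\<^sub>R (X :: 'n::finite op) = cscale (of_real r) X"
  by (simp only: vec_eq_iff scaleR_op_nth cscale_nth) simp

lemma cscale_cscale: "cscale c (cscale d X) = cscale (c * d) X"
  by (simp add: vec_eq_iff)

lemma cscale_one [simp]: "cscale 1 X = X"
  by (simp add: vec_eq_iff)

lemma cscale_sum: "cscale c (sum f A) = (\<Sum>a\<in>A. cscale c (f a))"
  by (simp add: vec_eq_iff sum_distrib_left)

lemma kron_cscale_left: "kron (cscale c A) B = cscale c (kron A B)"
  by (simp add: vec_eq_iff kron_def mult.assoc)

lemma kron_zero_left [simp]: "kron 0 B = 0"
  by (simp add: vec_eq_iff kron_def)

lemma commutator_cscale: "commutator Q (cscale c X) = cscale c (commutator Q X)"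
  by (simp add: vec_eq_iff commutator_def matrix_matrix_mult_def sum_distrib_left algebra_simps)

lemma matrix_add_rdistrib: "(A + B) ** C = A ** C + B ** C"
  by (simp add: matrix_matrix_mult_def vec_eq_iff sum.distrib distrib_right)

lemma linear_commutator: "linear (commutator Q)"
proof (rule linearI)
  show "commutator Q (X + Y) = commutator Q X + commutator Q Y" for X Y
    by (simp add: commutator_def matrix_add_ldistrib matrix_add_rdistrib)
  show "commutator Q (r *\<^sub>R X) = r *\<^sub>R commutator Q X" for r X
    by (simp add: scaleR_eq_cscale commutator_cscale)
qed

lemma sum_UNIV_prod:
  "(\<Sum>s\<in>(UNIV :: ('a::finite \<times> 'b::finite) set). f s) = (\<Sum>a\<in>UNIV. \<Sum>b\<in>UNIV. f (a, b))"
  by (simp add: sum.cartesian_product flip: UNIV_Times_UNIV)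

lemma sum_swap_first_last:
  "(\<Sum>a\<in>A. \<Sum>b\<in>B. \<Sum>c\<in>C. f a b c) = (\<Sum>c\<in>C. \<Sum>b\<in>B. \<Sum>a\<in>A. f a b c)"
proof -
  have "(\<Sum>a\<in>A. \<Sum>b\<in>B. \<Sum>c\<in>C. f a b c) = (\<Sum>b\<in>B. \<Sum>a\<in>A. \<Sum>c\<in>C. f a b c)"
    by (rule sum.swap)
  also have "\<dots> = (\<Sum>b\<in>B. \<Sum>c\<in>C. \<Sum>a\<in>A. f a b c)"
    by (rule sum.cong[OF refl], rule sum.swap)
  also have "\<dots> = (\<Sum>c\<in>C. \<Sum>b\<in>B. \<Sum>a\<in>A. f a b c)"
    by (rule sum.swap)
  finally show ?thesis .
qed

lemma sum_rotate3:
  "(\<Sum>a\<in>A. \<Sum>b\<in>B. \<Sum>c\<in>C. f a b c) = (\<Sum>b\<in>B. \<Sum>c\<in>C. \<Sum>a\<in>A. f a b c)"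
  by (subst sum.swap) (rule sum.cong[OF refl], rule sum.swap)

lemma kron_mult: "kron A B ** kron C D = kron (A ** C) (B ** D)"
  by (simp add: vec_eq_iff kron_def matrix_matrix_mult_def sum_UNIV_prod sum_product mult_ac)

lemma adj_kron: "adj (kron A B) = kron (adj A) (adj B)"
  by (simp add: vec_eq_iff kron_def adj_def)

lemma hermitian_transpose: "hermitian Q \<Longrightarrow> hermitian (transpose Q)"
  unfolding hermitian_def adj_def transpose_def by (simp add: vec_eq_iff)

definition cnj_op :: "'n::finite op \<Rightarrow> 'n op" where
  "cnj_op X = (\<chi> i j. cnj (X $ i $ j))"

lemma cnj_op_cnj_op [simp]: "cnj_op (cnj_op X) = X"
  by (simp add: cnj_op_def vec_eq_iff)

lemma cnj_op_mult: "cnj_op (A ** B) = cnj_op A ** cnj_op B"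
  by (simp add: cnj_op_def vec_eq_iff matrix_matrix_mult_def)

lemma cnj_op_transpose: "cnj_op (transpose A) = adj A"
  by (simp add: cnj_op_def adj_def transpose_def)

lemma cnj_op_hermitian: "hermitian Q \<Longrightarrow> cnj_op Q = transpose Q"
  unfolding hermitian_def by (metis cnj_op_cnj_op cnj_op_transpose)

lemma cnj_op_diff: "cnj_op (A - B) = cnj_op A - cnj_op B"
  by (simp add: cnj_op_def vec_eq_iff)

lemma cnj_op_commutator: "cnj_op (commutator Q X) = commutator (cnj_op Q) (cnj_op X)"
  by (simp add: commutator_def cnj_op_mult cnj_op_diff)

lemma cnj_op_cscale: "cnj_op (cscale c X) = cscale (cnj c) (cnj_op X)"
  by (simp add: cnj_op_def vec_eq_iff)

section \<open>The Hilbert-Schmidt inner product\<close>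

definition hs_inner :: "'n::finite op \<Rightarrow> 'n op \<Rightarrow> complex" where
  "hs_inner X Y = (\<Sum>i\<in>UNIV. \<Sum>j\<in>UNIV. cnj (X $ i $ j) * Y $ i $ j)"

lemma hs_inner_zero_right [simp]: "hs_inner X 0 = 0"
  by (simp add: hs_inner_def)

lemma hs_inner_zero_left [simp]: "hs_inner 0 X = 0"
  by (simp add: hs_inner_def)

lemma hs_inner_add_right: "hs_inner X (Y + Z) = hs_inner X Y + hs_inner X Z"
  by (simp add: hs_inner_def algebra_simps sum.distrib)

lemma hs_inner_diff_right: "hs_inner X (Y - Z) = hs_inner X Y - hs_inner X Z"
  by (simp add: hs_inner_def algebra_simps sum_subtractf)

lemma hs_inner_diff_left: "hs_inner (Y - Z) X = hs_inner Y X - hs_inner Z X"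
  by (simp add: hs_inner_def algebra_simps sum_subtractf)

lemma hs_inner_minus_right: "hs_inner X (- Y) = - hs_inner X Y"
  by (simp add: hs_inner_def sum_negf)

lemma hs_inner_minus_left: "hs_inner (- Y) X = - hs_inner Y X"
  by (simp add: hs_inner_def sum_negf)

lemma hs_inner_cscale_right: "hs_inner X (cscale c Y) = c * hs_inner X Y"
  by (simp add: hs_inner_def sum_distrib_left algebra_simps)

lemma hs_inner_cscale_left: "hs_inner (cscale c X) Y = cnj c * hs_inner X Y"
  by (simp add: hs_inner_def sum_distrib_left algebra_simps)

lemma hs_inner_scaleR_right: "hs_inner X (r *\<^sub>R Y) = of_real r * hs_inner X Y"
  by (simp add: scaleR_eq_cscale hs_inner_cscale_right)

lemma hs_inner_scaleR_left: "hs_inner (r *\<^sub>R X) Y = of_real r * hs_inner X Y"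
  by (simp add: scaleR_eq_cscale hs_inner_cscale_left)

lemma hs_inner_sum_right: "hs_inner X (sum f A) = (\<Sum>a\<in>A. hs_inner X (f a))"
  by (simp add: hs_inner_def sum_distrib_left sum.swap[of _ A])

lemma cnj_hs_inner: "cnj (hs_inner X Y) = hs_inner Y X"
  by (simp add: hs_inner_def mult.commute)

lemma Re_hs_inner: "Re (hs_inner X Y) = inner X Y"
  by (simp add: hs_inner_def inner_vec_def inner_complex_def Re_sum)

lemma hs_inner_self: "hs_inner X X = of_real ((norm X)\<^sup>2)"
proof (rule complex_eqI)
  show "Re (hs_inner X X) = Re (of_real ((norm X)\<^sup>2))"
    by (simp add: Re_hs_inner dot_square_norm)
  show "Im (hs_inner X X) = Im (of_real ((norm X)\<^sup>2))"
    by (simp add: hs_inner_def Im_sum)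
qed

lemma hs_inner_self_eq_0 [simp]: "hs_inner X X = 0 \<longleftrightarrow> X = 0"
  by (simp add: hs_inner_self)

definition normalize_op :: "'n::finite op \<Rightarrow> 'n op" where
  "normalize_op X = cscale (of_real (1 / norm X)) X"

lemma cscale_norm_normalize_op: "X \<noteq> 0 \<Longrightarrow> cscale (of_real (norm X)) (normalize_op X) = X"
  by (simp add: normalize_op_def cscale_cscale flip: of_real_mult)

lemma hs_inner_normalize_op:
  "hs_inner (normalize_op X) (normalize_op Y) = hs_inner X Y / of_real (norm X * norm Y)"
  by (simp add: normalize_op_def hs_inner_cscale_left hs_inner_cscale_right)

lemma hs_inner_normalize_op_self: "X \<noteq> 0 \<Longrightarrow> hs_inner (normalize_op X) (normalize_op X) = 1"
  by (simp only: hs_inner_normalize_op) (simp add: hs_inner_self power2_eq_square)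

lemma hs_inner_eqI: "(\<And>X. hs_inner X A = hs_inner X B) \<Longrightarrow> A = B"
  using hs_inner_self_eq_0[of "A - B"] by (simp add: hs_inner_diff_right)

lemma trace_adj_mult: "trace (adj X ** Y) = hs_inner X Y"
proof -
  have "trace (adj X ** Y) = (\<Sum>j\<in>UNIV. \<Sum>i\<in>UNIV. cnj (X $ i $ j) * Y $ i $ j)"
    by (simp add: trace_def matrix_matrix_mult_def adj_def)
  also have "\<dots> = hs_inner X Y"
    unfolding hs_inner_def by (rule sum.swap)
  finally show ?thesis .
qed

lemma hs_inner_mult_left: "hs_inner X (A ** Y) = hs_inner (adj A ** X) Y"
proof -
  have "hs_inner X (A ** Y) = (\<Sum>i\<in>UNIV. \<Sum>j\<in>UNIV. \<Sum>k\<in>UNIV. cnj (X$i$j) * A$i$k * Y$k$j)"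
    by (simp add: hs_inner_def matrix_matrix_mult_def sum_distrib_left mult.assoc)
  also have "\<dots> = (\<Sum>k\<in>UNIV. \<Sum>j\<in>UNIV. \<Sum>i\<in>UNIV. cnj (X$i$j) * A$i$k * Y$k$j)"
    by (rule sum_swap_first_last)
  also have "\<dots> = hs_inner (adj A ** X) Y"
    by (simp add: hs_inner_def matrix_matrix_mult_def adj_def sum_distrib_left mult_ac)
  finally show ?thesis .
qed

lemma hs_inner_mult_right: "hs_inner X (Y ** A) = hs_inner (X ** adj A) Y"
proof -
  have "hs_inner X (Y ** A) = (\<Sum>i\<in>UNIV. \<Sum>j\<in>UNIV. \<Sum>k\<in>UNIV. cnj (X$i$j) * A$k$j * Y$i$k)"
    by (simp add: hs_inner_def matrix_matrix_mult_def sum_distrib_left mult_ac)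
  also have "\<dots> = (\<Sum>i\<in>UNIV. \<Sum>k\<in>UNIV. \<Sum>j\<in>UNIV. cnj (X$i$j) * A$k$j * Y$i$k)"
    by (rule sum.cong[OF refl], rule sum.swap)
  also have "\<dots> = hs_inner (X ** adj A) Y"
    by (simp add: hs_inner_def matrix_matrix_mult_def adj_def sum_distrib_left sum_distrib_right mult_ac)
  finally show ?thesis .
qed

lemma hs_inner_commutator:
  assumes "hermitian Q"
  shows "hs_inner X (commutator Q Y) = hs_inner (commutator Q X) Y"
  using assms unfolding commutator_def hermitian_def
  by (simp only: hs_inner_diff_right hs_inner_diff_left hs_inner_mult_left[of X Q Y]
      hs_inner_mult_right[of X Y Q])

lemma hs_inner_cnj_op: "hs_inner (cnj_op X) (cnj_op Y) = cnj (hs_inner X Y)"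
  by (simp add: cnj_op_def hs_inner_def)

section \<open>Simultaneous diagonalisation\<close>

definition hs_orthonormal :: "'n::finite op set \<Rightarrow> bool" where
  "hs_orthonormal F \<longleftrightarrow> (\<forall>x\<in>F. \<forall>y\<in>F. hs_inner x y = (if x = y then 1 else 0))"

definition hs_orthocomplement :: "'n::finite op set \<Rightarrow> 'n op set" where
  "hs_orthocomplement F = {Y. \<forall>X\<in>F. hs_inner X Y = 0}"

lemma subspace_hs_orthocomplement: "subspace (hs_orthocomplement F)"
  by (simp add: subspace_def hs_orthocomplement_def hs_inner_add_right hs_inner_scaleR_right)

lemma hs_orthonormal_independent:
  assumes "hs_orthonormal F"
  shows "independent F"
proof -
  have "pairwise orthogonal F"
    using assms unfolding hs_orthonormal_def pairwise_def orthogonal_def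
    by (metis Re_hs_inner zero_complex.simps(1))
  moreover have "0 \<notin> F" using assms unfolding hs_orthonormal_def by fastforce
  ultimately show ?thesis by (rule pairwise_orthogonal_independent)
qed

lemma hs_orthonormal_finite_card_le:
  fixes F :: "'n::finite op set"
  assumes "hs_orthonormal F"
  shows "finite F \<and> card F \<le> DIM('n op)"
  using independent_bound[OF hs_orthonormal_independent[OF assms]] .

lemma hs_orthonormal_subset: "hs_orthonormal F \<Longrightarrow> G \<subseteq> F \<Longrightarrow> hs_orthonormal G"
  unfolding hs_orthonormal_def by blast

lemma hs_orthocomplement_invariant:
  assumes sym: "\<And>X Y. hs_inner X (f Y) = hs_inner (f X) Y"
    and eigen: "\<forall>X\<in>F. \<exists>a. f X = a *\<^sub>R X"
  shows "f ` hs_orthocomplement F \<subseteq> hs_orthocomplement F"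
proof (clarsimp simp: hs_orthocomplement_def)
  fix Y X assume "\<forall>X\<in>F. hs_inner X Y = 0" "X \<in> F"
  moreover obtain a where "f X = a *\<^sub>R X" using eigen \<open>X \<in> F\<close> by blast
  ultimately show "hs_inner X (f Y) = 0" by (simp add: sym hs_inner_scaleR_left)
qed

lemma hs_orthonormal_expansion:
  assumes "finite F" and "hs_orthonormal F" and "hs_orthocomplement F = {0}"
  shows "Y = (\<Sum>X\<in>F. cscale (hs_inner X Y) X)"
proof -
  have "hs_inner X' (\<Sum>X\<in>F. cscale (hs_inner X Y) X) = hs_inner X' Y" if "X' \<in> F" for X'
  proof -
    have "hs_inner X' (\<Sum>X\<in>F. cscale (hs_inner X Y) X) = (\<Sum>X\<in>F. if X' = X then hs_inner X Y else 0)"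
      using assms(2) that unfolding hs_orthonormal_def
      by (auto simp: hs_inner_sum_right hs_inner_cscale_right intro: sum.cong)
    also have "\<dots> = hs_inner X' Y" using that \<open>finite F\<close> by simp
    finally show ?thesis .
  qed
  hence "Y - (\<Sum>X\<in>F. cscale (hs_inner X Y) X) \<in> hs_orthocomplement F"
    by (simp add: hs_orthocomplement_def hs_inner_diff_right)
  thus ?thesis using assms(3) by simp
qed

text \<open>A maximal orthonormal family of common eigenvectors has trivial orthocomplement: the
  orthocomplement is invariant under f and g, so a common eigenvector in it, found for the real
  inner product Re \<circ> hs_inner of the Euclidean space 'n op, would extend the family.\<close>
lemma commuting_hs_selfadjoint_eigenbasis:
  fixes f g :: "'n::finite op \<Rightarrow> 'n op"
  assumes f: "linear f" "\<And>X Y. hs_inner X (f Y) = hs_inner (f X) Y"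
    and g: "linear g" "\<And>X Y. hs_inner X (g Y) = hs_inner (g X) Y"
    and comm: "\<And>X. f (g X) = g (f X)"
  shows "\<exists>F. finite F \<and> hs_orthonormal F \<and> (\<forall>X\<in>F. (\<exists>a. f X = a *\<^sub>R X) \<and> (\<exists>b. g X = b *\<^sub>R X)) \<and>
    (\<forall>Y. Y = (\<Sum>X\<in>F. cscale (hs_inner X Y) X))"
proof -
  define P where "P F \<longleftrightarrow> hs_orthonormal F \<and> (\<forall>X\<in>F. (\<exists>a. f X = a *\<^sub>R X) \<and> (\<exists>b. g X = b *\<^sub>R X))"
    for F
  have bound: "card F \<le> DIM('n op)" if "P F" for F
    using that hs_orthonormal_finite_card_le unfolding P_def by blast
  have "P {}" unfolding P_def hs_orthonormal_def by simp
  then obtain F where "P F" and maximal: "\<And>F'. P F' \<Longrightarrow> card F' \<le> card F"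
    using Lattices_Big.ex_has_greatest_nat[of P "{}" card "Suc DIM('n op)"] bound
    by (metis le_imp_less_Suc)
  hence "finite F" using hs_orthonormal_finite_card_le unfolding P_def by blast
  define S where "S = hs_orthocomplement F"
  have "S = {0}"
  proof (rule ccontr)
    assume "S \<noteq> {0}"
    have inv: "f ` S \<subseteq> S" "g ` S \<subseteq> S"
      using \<open>P F\<close> hs_orthocomplement_invariant[OF f(2)] hs_orthocomplement_invariant[OF g(2)]
      unfolding S_def P_def by simp_all
    have sym: "inner X (f Y) = inner (f X) Y" "inner X (g Y) = inner (g X) Y" for X Y
      by (simp_all add: f(2) g(2) flip: Re_hs_inner)
    obtain Z where "Z \<in> S" "norm Z = 1" and eig: "(\<exists>a. f Z = a *\<^sub>R Z) \<and> (\<exists>b. g Z = b *\<^sub>R Z)"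
      using commuting_selfadjoint_common_eigenvector[OF subspace_hs_orthocomplement[of F, folded S_def]
          \<open>S \<noteq> {0}\<close> inv f(1) sym(1) g(1) sym(2) comm] by blast
    have "hs_inner Z Z = 1" using \<open>norm Z = 1\<close> by (simp add: hs_inner_self)
    have "Z \<notin> F"
      using \<open>Z \<in> S\<close> \<open>hs_inner Z Z = 1\<close> unfolding S_def hs_orthocomplement_def by force
    have "hs_inner X Z = 0" "hs_inner Z X = 0" if "X \<in> F" for X
      using \<open>Z \<in> S\<close> that cnj_hs_inner[of X Z] unfolding S_def hs_orthocomplement_def by auto
    hence "P (insert Z F)"
      using \<open>P F\<close> eig \<open>hs_inner Z Z = 1\<close> \<open>Z \<notin> F\<close> unfolding P_def hs_orthonormal_def by auto
    hence "card (insert Z F) \<le> card F" by (rule maximal)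
    thus False using \<open>Z \<notin> F\<close> \<open>finite F\<close> by simp
  qed
  thus ?thesis
    using hs_orthonormal_expansion \<open>finite F\<close> \<open>P F\<close> unfolding S_def P_def by blast
qed

section \<open>Partial contraction\<close>

definition contract :: "('a::finite \<times> 'b::finite) op \<Rightarrow> 'b op \<Rightarrow> 'a op" where
  "contract W Y = (\<chi> i j. \<Sum>k\<in>UNIV. \<Sum>l\<in>UNIV. W $ (i, k) $ (j, l) * Y $ k $ l)"

definition contract_adj :: "('a::finite \<times> 'b::finite) op \<Rightarrow> 'a op \<Rightarrow> 'b op" where
  "contract_adj W X = (\<chi> k l. \<Sum>i\<in>UNIV. \<Sum>j\<in>UNIV. cnj (W $ (i, k) $ (j, l)) * X $ i $ j)"

lemma hs_inner_contract: "hs_inner X (contract W Y) = hs_inner (contract_adj W X) Y"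
proof -
  have "hs_inner X (contract W Y)
      = (\<Sum>i\<in>UNIV. \<Sum>j\<in>UNIV. \<Sum>k\<in>UNIV. \<Sum>l\<in>UNIV. cnj (X$i$j) * W$(i,k)$(j,l) * Y$k$l)"
    by (simp add: hs_inner_def contract_def sum_distrib_left mult.assoc)
  also have "\<dots> = (\<Sum>i\<in>UNIV. \<Sum>k\<in>UNIV. \<Sum>l\<in>UNIV. \<Sum>j\<in>UNIV. cnj (X$i$j) * W$(i,k)$(j,l) * Y$k$l)"
    by (rule sum.cong[OF refl], rule sum_rotate3)
  also have "\<dots> = (\<Sum>k\<in>UNIV. \<Sum>l\<in>UNIV. \<Sum>i\<in>UNIV. \<Sum>j\<in>UNIV. cnj (X$i$j) * W$(i,k)$(j,l) * Y$k$l)"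
    by (rule sum_rotate3)
  also have "\<dots> = hs_inner (contract_adj W X) Y"
    by (simp add: hs_inner_def contract_adj_def sum_distrib_left sum_distrib_right mult_ac)
  finally show ?thesis .
qed

lemma hs_inner_contract_adj_right: "hs_inner Y (contract_adj W X) = hs_inner (contract W Y) X"
  by (metis cnj_hs_inner hs_inner_contract)

lemma hs_inner_kron_cnj_op: "hs_inner (kron X (cnj_op Y)) W = hs_inner X (contract W Y)"
proof -
  have "hs_inner (kron X (cnj_op Y)) W
      = (\<Sum>i\<in>UNIV. \<Sum>k\<in>UNIV. \<Sum>j\<in>UNIV. \<Sum>l\<in>UNIV. cnj (X$i$j) * W$(i,k)$(j,l) * Y$k$l)"
    by (simp add: hs_inner_def kron_def cnj_op_def sum_UNIV_prod mult_ac)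
  also have "\<dots> = (\<Sum>i\<in>UNIV. \<Sum>j\<in>UNIV. \<Sum>k\<in>UNIV. \<Sum>l\<in>UNIV. cnj (X$i$j) * W$(i,k)$(j,l) * Y$k$l)"
    by (rule sum.cong[OF refl], rule sum.swap)
  also have "\<dots> = hs_inner X (contract W Y)"
    by (simp add: hs_inner_def contract_def sum_distrib_left mult.assoc)
  finally show ?thesis .
qed

lemma contract_kron_mult: "contract (kron A B ** W) Y = A ** contract W (transpose B ** Y)"
proof (rule hs_inner_eqI)
  fix X
  have "hs_inner X (contract (kron A B ** W) Y) = hs_inner (kron (adj A ** X) (adj B ** cnj_op Y)) W"
    by (simp add: flip: hs_inner_kron_cnj_op add: hs_inner_mult_left adj_kron kron_mult)
  also have "\<dots> = hs_inner X (A ** contract W (transpose B ** Y))"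
    by (simp add: hs_inner_mult_left cnj_op_mult cnj_op_transpose flip: hs_inner_kron_cnj_op)
  finally show "hs_inner X (contract (kron A B ** W) Y) = hs_inner X (A ** contract W (transpose B ** Y))" .
qed

lemma contract_mult_kron: "contract (W ** kron A B) Y = contract W (Y ** transpose B) ** A"
proof (rule hs_inner_eqI)
  fix X
  have "hs_inner X (contract (W ** kron A B) Y) = hs_inner (kron (X ** adj A) (cnj_op Y ** adj B)) W"
    by (simp add: flip: hs_inner_kron_cnj_op add: hs_inner_mult_right adj_kron kron_mult)
  also have "\<dots> = hs_inner X (contract W (Y ** transpose B) ** A)"
    by (simp add: hs_inner_mult_right cnj_op_mult cnj_op_transpose flip: hs_inner_kron_cnj_op)
  finally show "hs_inner X (contract (W ** kron A B) Y) = hs_inner X (contract W (Y ** transpose B) ** A)" .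
qed

lemma contract_cscale_right: "contract W (cscale c Y) = cscale c (contract W Y)"
  by (simp add: contract_def vec_eq_iff sum_distrib_left mult_ac)

lemma contract_adj_cscale_right: "contract_adj W (cscale c X) = cscale c (contract_adj W X)"
  by (simp add: contract_adj_def vec_eq_iff sum_distrib_left mult_ac)

lemma linear_contract: "linear (contract W)"
proof (rule linearI)
  show "contract W (X + Y) = contract W X + contract W Y" for X Y
    by (simp add: contract_def vec_eq_iff distrib_left sum.distrib)
  show "contract W (r *\<^sub>R X) = r *\<^sub>R contract W X" for r X
    by (simp add: scaleR_eq_cscale contract_cscale_right)
qed

lemma linear_contract_adj: "linear (contract_adj W)"
proof (rule linearI)
  show "contract_adj W (X + Y) = contract_adj W X + contract_adj W Y" for X Y
    by (simp add: contract_adj_def vec_eq_iff distrib_left sum.distrib)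
  show "contract_adj W (r *\<^sub>R X) = r *\<^sub>R contract_adj W X" for r X
    by (simp add: scaleR_eq_cscale contract_adj_cscale_right)
qed

lemma contract_add_left: "contract (W + W') Y = contract W Y + contract W' Y"
  by (simp add: contract_def vec_eq_iff distrib_right sum.distrib)

lemma contract_zero_left [simp]: "contract 0 Y = 0"
  by (simp add: contract_def vec_eq_iff)

lemma contract_sum_left: "contract (sum f S) Y = (\<Sum>s\<in>S. contract (f s) Y)"
  by (induction S rule: infinite_finite_induct) (simp_all add: contract_add_left)

lemma contract_kron: "contract (kron A B) Y = cscale (hs_inner (cnj_op B) Y) A"
  by (simp add: contract_def kron_def hs_inner_def cnj_op_def vec_eq_iff sum_distrib_left mult_ac)

lemma contract_unit:
  "contract W (\<chi> a b. of_bool (a = k) * of_bool (b = l)) $ i $ j = W $ (i, k) $ (j, l)"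
  by (simp add: contract_def mult.assoc[symmetric] sum_distrib_right[symmetric])

lemma contract_eqI:
  assumes "\<And>Y. contract W Y = contract W' Y"
  shows "W = W'"
proof -
  have "W $ (i, k) $ (j, l) = W' $ (i, k) $ (j, l)" for i k j l
    using contract_unit[of W k l i j] contract_unit[of W' k l i j] assms by metis
  thus ?thesis by (simp add: vec_eq_iff)
qed

lemma kron_contract_expansion:
  assumes "\<And>Y. Y = (\<Sum>g\<in>F. cscale (hs_inner g Y) g)"
  shows "W = (\<Sum>g\<in>F. kron (contract W g) (cnj_op g))"
proof (rule contract_eqI)
  fix Y
  have "contract (\<Sum>g\<in>F. kron (contract W g) (cnj_op g)) Y = (\<Sum>g\<in>F. cscale (hs_inner g Y) (contract W g))"
    by (simp add: contract_sum_left contract_kron)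
  also have "\<dots> = contract W (\<Sum>g\<in>F. cscale (hs_inner g Y) g)"
    by (simp add: linear_sum[OF linear_contract] contract_cscale_right)
  also have "\<dots> = contract W Y" by (metis assms)
  finally show "contract W Y = contract (\<Sum>g\<in>F. kron (contract W g) (cnj_op g)) Y" ..
qed

lemma contract_commutator:
  assumes "commutator (kron QA (mat 1) + kron (mat 1) QB) W = 0"
  shows "commutator QA (contract W Y) = - contract W (commutator (transpose QB) Y)"
proof -
  have "contract ((kron QA (mat 1) + kron (mat 1) QB) ** W) Y
      = contract (W ** (kron QA (mat 1) + kron (mat 1) QB)) Y"
    using assms unfolding commutator_def by simp
  hence "contract (kron QA (mat 1) ** W) Y + contract (kron (mat 1) QB ** W) Y
      = contract (W ** kron QA (mat 1)) Y + contract (W ** kron (mat 1) QB) Y"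
    by (simp only: matrix_add_ldistrib matrix_add_rdistrib contract_add_left)
  hence "QA ** contract W Y + contract W (transpose QB ** Y)
      = contract W Y ** QA + contract W (Y ** transpose QB)"
    by (simp add: contract_kron_mult contract_mult_kron)
  thus ?thesis
    unfolding commutator_def by (simp add: linear_diff[OF linear_contract] algebra_simps)
qed

lemma contract_adj_commutator:
  assumes "commutator (kron QA (mat 1) + kron (mat 1) QB) W = 0"
    and "hermitian QA" and "hermitian QB"
  shows "contract_adj W (commutator QA X) = - commutator (transpose QB) (contract_adj W X)"
proof (rule hs_inner_eqI)
  fix Y
  have "hs_inner Y (contract_adj W (commutator QA X)) = hs_inner (commutator QA (contract W Y)) X"
    using assms(2) by (simp add: hs_inner_contract_adj_right hs_inner_commutator)
  also have "\<dots> = - hs_inner (contract W (commutator (transpose QB) Y)) X"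
    by (simp add: contract_commutator[OF assms(1)] hs_inner_minus_left)
  also have "\<dots> = - hs_inner Y (commutator (transpose QB) (contract_adj W X))"
    using hermitian_transpose[OF assms(3)]
    by (simp add: hs_inner_commutator flip: hs_inner_contract_adj_right)
  finally show "hs_inner Y (contract_adj W (commutator QA X))
      = hs_inner Y (- commutator (transpose QB) (contract_adj W X))"
    by (simp add: hs_inner_minus_right)
qed

lemma contract_adj_contract_commutator:
  assumes "commutator (kron QA (mat 1) + kron (mat 1) QB) W = 0"
    and "hermitian QA" and "hermitian QB"
  shows "contract_adj W (contract W (commutator (transpose QB) Y))
    = commutator (transpose QB) (contract_adj W (contract W Y))"
proof -
  have "contract W (commutator (transpose QB) Y) = - commutator QA (contract W Y)"
    unfolding contract_commutator[OF assms(1)] by simp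
  thus ?thesis by (simp add: linear_neg[OF linear_contract_adj] contract_adj_commutator[OF assms])
qed

lemma symmetric_operator_eigenbasis:
  fixes W :: "('a::finite \<times> 'b::finite) op"
  assumes "hermitian QA" and "hermitian QB"
    and symmetric: "commutator (kron QA (mat 1) + kron (mat 1) QB) W = 0"
  shows "\<exists>F p. finite F \<and> hs_orthonormal F \<and> W = (\<Sum>g\<in>F. kron (contract W g) (cnj_op g)) \<and>
    (\<forall>g\<in>F. commutator (transpose QB) g = p g *\<^sub>R g) \<and>
    (\<forall>g\<in>F. \<forall>g'\<in>F. g \<noteq> g' \<longrightarrow> hs_inner (contract W g) (contract W g') = 0)"
proof -
  define M where "M Y = contract_adj W (contract W Y)" for Y
  define L where "L = commutator (transpose QB)"
  have "linear M" unfolding M_def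
    using linear_compose[OF linear_contract linear_contract_adj] by (simp add: o_def)
  moreover have M_sym: "hs_inner X (M Y) = hs_inner (M X) Y" for X Y
    by (simp add: M_def hs_inner_contract_adj_right hs_inner_contract)
  moreover have "linear L" unfolding L_def by (rule linear_commutator)
  moreover have "hs_inner X (L Y) = hs_inner (L X) Y" for X Y
    unfolding L_def using hermitian_transpose[OF \<open>hermitian QB\<close>] by (rule hs_inner_commutator)
  moreover have "M (L Y) = L (M Y)" for Y
    unfolding M_def L_def by (rule contract_adj_contract_commutator[OF symmetric assms(1,2)])
  ultimately obtain F where "finite F" "hs_orthonormal F"
    and eigen: "\<forall>X\<in>F. (\<exists>a. M X = a *\<^sub>R X) \<and> (\<exists>b. L X = b *\<^sub>R X)"
    and complete: "\<forall>Y. Y = (\<Sum>X\<in>F. cscale (hs_inner X Y) X)"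
    using commuting_hs_selfadjoint_eigenbasis[of M L] by blast
  obtain p where "\<forall>g\<in>F. L g = p g *\<^sub>R g"
    using bchoice[of F "\<lambda>g b. L g = b *\<^sub>R g"] eigen by blast
  moreover have "hs_inner (contract W g) (contract W g') = 0" if "g \<in> F" "g' \<in> F" "g \<noteq> g'" for g g'
  proof -
    obtain a where "M g = a *\<^sub>R g" using eigen \<open>g \<in> F\<close> by blast
    have "hs_inner (contract W g) (contract W g') = hs_inner (M g) g'"
      by (simp add: M_def hs_inner_contract)
    also have "\<dots> = of_real a * hs_inner g g'"
      by (simp add: \<open>M g = a *\<^sub>R g\<close> hs_inner_scaleR_left)
    finally have "hs_inner (contract W g) (contract W g') = of_real a * hs_inner g g'" .
    thus ?thesis using \<open>hs_orthonormal F\<close> that unfolding hs_orthonormal_def by simp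
  qed
  ultimately show ?thesis
    using \<open>finite F\<close> \<open>hs_orthonormal F\<close> kron_contract_expansion[of F, OF complete[rule_format]]
    unfolding L_def by (intro exI[of _ F] exI[of _ p]) simp
qed

definition symmetry_resolved_schmidt_decomposition ::
    "'a::finite op \<Rightarrow> 'b::finite op \<Rightarrow> ('a \<times> 'b) op \<Rightarrow> (complex \<times> nat) set \<Rightarrow>
      (complex \<times> nat \<Rightarrow> real) \<Rightarrow> (complex \<times> nat \<Rightarrow> 'a op) \<Rightarrow> (complex \<times> nat \<Rightarrow> 'b op) \<Rightarrow> bool" where
  "symmetry_resolved_schmidt_decomposition QA QB W K lam OA OB \<longleftrightarrow>
     finite K \<and>
     W = (\<Sum>(q,j)\<in>K. cscale (complex_of_real (lam (q,j))) (kron (OA (q,j)) (OB (-q,j)))) \<and>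
     (\<forall>(q,j)\<in>K. ad_eigenvalue QA q \<and> lam (q,j) \<ge> 0) \<and>
     (\<forall>(q,j)\<in>K. \<forall>(q',j')\<in>K.
         trace (adj (OA (q,j)) ** OA (q',j')) = (if q = q' \<and> j = j' then 1 else 0) \<and>
         trace (adj (OB (-q,j)) ** OB (-q',j')) = (if q = q' \<and> j = j' then 1 else 0)) \<and>
     (\<forall>(q,j)\<in>K. commutator QA (OA (q,j)) = cscale q (OA (q,j)) \<and>
         commutator QB (OB (-q,j)) = cscale (-q) (OB (-q,j)))"

lemma symmetry_resolved_schmidt_decomposition_of_eigenbasis:
  fixes A :: "'b::finite op \<Rightarrow> 'a::finite op" and p :: "'b op \<Rightarrow> real"
  assumes "finite G" and "hs_orthonormal G"
    and expansion: "W = (\<Sum>g\<in>G. kron (A g) (cnj_op g))"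
    and nonzero: "\<And>g. g \<in> G \<Longrightarrow> A g \<noteq> 0"
    and orthogonal: "\<And>g g'. g \<in> G \<Longrightarrow> g' \<in> G \<Longrightarrow> g \<noteq> g' \<Longrightarrow> hs_inner (A g) (A g') = 0"
    and eigen_A: "\<And>g. g \<in> G \<Longrightarrow> commutator QA (A g) = cscale (- of_real (p g)) (A g)"
    and eigen_B: "\<And>g. g \<in> G \<Longrightarrow> commutator QB (cnj_op g) = cscale (of_real (p g)) (cnj_op g)"
  shows "\<exists>K lam OA OB. symmetry_resolved_schmidt_decomposition QA QB W K lam OA OB"
proof -
  define J where "J = {0..<card G}"
  obtain e where e: "bij_betw e J G" unfolding J_def using ex_bij_betw_nat_finite[OF \<open>finite G\<close>] by blast
  have eG: "e j \<in> G" if "j \<in> J" for j using e that by (auto simp: bij_betw_def)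
  have e_eq: "e j = e j' \<longleftrightarrow> j = j'" if "j \<in> J" "j' \<in> J" for j j'
    using e that by (auto simp: bij_betw_def inj_on_def)
  define \<kappa> where "\<kappa> j = (- complex_of_real (p (e j)), j)" for j
  define K where "K = \<kappa> ` J"
  define lam where "lam = (\<lambda>(q::complex, j). norm (A (e j)))"
  define OA where "OA = (\<lambda>(q::complex, j). normalize_op (A (e j)))"
  define OB where "OB = (\<lambda>(q::complex, j). cnj_op (e j))"
  have K_iff: "(q, j) \<in> K \<longleftrightarrow> j \<in> J \<and> q = - of_real (p (e j))" for q j
    unfolding K_def \<kappa>_def by auto
  have "inj_on \<kappa> J" unfolding \<kappa>_def inj_on_def by simp
  have "(\<Sum>(q,j)\<in>K. cscale (complex_of_real (lam (q,j))) (kron (OA (q,j)) (OB (-q,j))))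
      = (\<Sum>j\<in>J. kron (A (e j)) (cnj_op (e j)))"
    unfolding K_def lam_def OA_def OB_def \<kappa>_def
    using nonzero[OF eG]
    by (simp add: sum.reindex[OF \<open>inj_on \<kappa> J\<close>, unfolded \<kappa>_def] cscale_norm_normalize_op
        flip: kron_cscale_left)
  also have "\<dots> = W" unfolding expansion by (rule sum.reindex_bij_betw[OF e])
  finally have sum: "W = (\<Sum>(q,j)\<in>K. cscale (complex_of_real (lam (q,j))) (kron (OA (q,j)) (OB (-q,j))))" ..
  have orth_A: "hs_inner (OA (q,j)) (OA (q',j')) = (if j = j' then 1 else 0)" if "j \<in> J" "j' \<in> J" for q q' j j'
    using hs_inner_normalize_op_self[OF nonzero[OF eG[OF that(1)]]]
      orthogonal[OF eG[OF that(1)] eG[OF that(2)]] e_eq[OF that]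
    unfolding OA_def by (auto simp: hs_inner_normalize_op)
  have orth_B: "hs_inner (OB (q,j)) (OB (q',j')) = (if j = j' then 1 else 0)" if "j \<in> J" "j' \<in> J" for q q' j j'
    using \<open>hs_orthonormal G\<close> eG[OF that(1)] eG[OF that(2)] e_eq[OF that]
    unfolding OB_def hs_orthonormal_def by (simp add: hs_inner_cnj_op)
  have eig: "commutator QA (OA (q,j)) = cscale q (OA (q,j)) \<and> commutator QB (OB (-q,j)) = cscale (-q) (OB (-q,j))"
    if "(q, j) \<in> K" for q j
    using that eigen_A[OF eG] eigen_B[OF eG] unfolding K_iff OA_def OB_def
    by (simp add: normalize_op_def commutator_cscale cscale_cscale mult.commute)
  have ad: "ad_eigenvalue QA q" if "(q, j) \<in> K" for q j
  proof -
    have "hs_inner (OA (q,j)) (OA (q,j)) = 1" using orth_A that unfolding K_iff by simp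
    hence "OA (q,j) \<noteq> 0" by auto
    thus ?thesis using eig[OF that] unfolding ad_eigenvalue_def by blast
  qed
  show ?thesis
    unfolding symmetry_resolved_schmidt_decomposition_def
  proof (intro exI[of _ K] exI[of _ lam] exI[of _ OA] exI[of _ OB] conjI)
    show "finite K" unfolding K_def J_def by simp
  qed (use sum eig ad in \<open>auto simp: K_iff lam_def trace_adj_mult orth_A orth_B\<close>)
qed

lemma symmetry_resolved_schmidt_decomposition_exists:
  fixes W :: "('a::finite \<times> 'b::finite) op"
  assumes "hermitian QA" and "hermitian QB"
    and symmetric: "commutator (kron QA (mat 1) + kron (mat 1) QB) W = 0"
  shows "\<exists>K lam OA OB. symmetry_resolved_schmidt_decomposition QA QB W K lam OA OB"
proof -
  obtain F p where "finite F" "hs_orthonormal F"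
    and expansion: "W = (\<Sum>g\<in>F. kron (contract W g) (cnj_op g))"
    and eigen: "\<forall>g\<in>F. commutator (transpose QB) g = p g *\<^sub>R g"
    and orthogonal: "\<forall>g\<in>F. \<forall>g'\<in>F. g \<noteq> g' \<longrightarrow> hs_inner (contract W g) (contract W g') = 0"
    using symmetric_operator_eigenbasis[OF assms] by blast
  define G where "G = {g \<in> F. contract W g \<noteq> 0}"
  have "G \<subseteq> F" unfolding G_def by blast
  note expansion
  also have "(\<Sum>g\<in>F. kron (contract W g) (cnj_op g)) = (\<Sum>g\<in>G. kron (contract W g) (cnj_op g))"
    unfolding G_def by (rule sum.mono_neutral_right) (use \<open>finite F\<close> in auto)
  finally have "W = (\<Sum>g\<in>G. kron (contract W g) (cnj_op g))" .
  moreover have "commutator QA (contract W g) = cscale (- of_real (p g)) (contract W g)" if "g \<in> G" for g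
  proof -
    have "commutator QA (contract W g) = - contract W (p g *\<^sub>R g)"
      using that eigen \<open>G \<subseteq> F\<close> by (auto simp: contract_commutator[OF symmetric])
    thus ?thesis by (simp add: scaleR_eq_cscale contract_cscale_right vec_eq_iff)
  qed
  moreover have "commutator QB (cnj_op g) = cscale (of_real (p g)) (cnj_op g)" if "g \<in> G" for g
  proof -
    have "commutator QB (cnj_op g) = cnj_op (commutator (transpose QB) g)"
      using cnj_op_hermitian[OF \<open>hermitian QB\<close>] by (metis cnj_op_cnj_op cnj_op_commutator)
    also have "\<dots> = cnj_op (p g *\<^sub>R g)" using that eigen \<open>G \<subseteq> F\<close> by auto
    finally show ?thesis by (simp add: scaleR_eq_cscale cnj_op_cscale)
  qed
  ultimately show ?thesis
    using symmetry_resolved_schmidt_decomposition_of_eigenbasis[of G W "contract W" QA p QB]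
      finite_subset[OF \<open>G \<subseteq> F\<close> \<open>finite F\<close>] hs_orthonormal_subset[OF \<open>hs_orthonormal F\<close> \<open>G \<subseteq> F\<close>]
      orthogonal \<open>G \<subseteq> F\<close>
    unfolding G_def by blast
qed

lemma symmetry_resolved_schmidt_decomposition_scale:
  assumes "symmetry_resolved_schmidt_decomposition QA QB W K lam OA OB" and "c \<ge> 0"
  shows "symmetry_resolved_schmidt_decomposition QA QB (cscale (of_real c) W) K (\<lambda>x. c * lam x) OA OB"
  using assms unfolding symmetry_resolved_schmidt_decomposition_def
  by (auto simp: cscale_sum cscale_cscale case_prod_beta)

theorem proposition4:
  fixes QA :: "'a::finite op" and QB :: "'b::finite op" and Op :: "('a \<times> 'b) op"
  assumes "hermitian QA" and "hermitian QB" and "Op \<noteq> 0"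
    and "commutator (kron QA (mat 1) + kron (mat 1) QB) Op = 0"
  shows "\<exists>(K :: (complex \<times> nat) set) (lam :: complex \<times> nat \<Rightarrow> real) OA OB.
           finite K \<and>
           cscale (complex_of_real (1 / sqrt (Re (trace (adj Op ** Op))))) Op
             = (\<Sum>(q,j)\<in>K. cscale (complex_of_real (lam (q,j))) (kron (OA (q,j)) (OB (-q,j)))) \<and>
           (\<forall>(q,j)\<in>K. ad_eigenvalue QA q \<and> lam (q,j) \<ge> 0) \<and>
           (\<forall>(q,j)\<in>K. \<forall>(q',j')\<in>K.
               trace (adj (OA (q,j)) ** OA (q',j')) = (if q = q' \<and> j = j' then 1 else 0) \<and>
               trace (adj (OB (-q,j)) ** OB (-q',j')) = (if q = q' \<and> j = j' then 1 else 0)) \<and>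
           (\<forall>(q,j)\<in>K. commutator QA (OA (q,j)) = cscale q (OA (q,j)) \<and>
               commutator QB (OB (-q,j)) = cscale (-q) (OB (-q,j)))"
proof -
  define s where "s = 1 / sqrt (Re (trace (adj Op ** Op)))"
  have "s \<ge> 0" unfolding s_def by (simp add: trace_adj_mult hs_inner_self)
  obtain K lam OA OB where "symmetry_resolved_schmidt_decomposition QA QB Op K lam OA OB"
    using symmetry_resolved_schmidt_decomposition_exists[OF assms(1,2,4)] by blast
  hence decomposition:
    "symmetry_resolved_schmidt_decomposition QA QB (cscale (of_real s) Op) K (\<lambda>x. s * lam x) OA OB"
    using \<open>s \<ge> 0\<close> by (rule symmetry_resolved_schmidt_decomposition_scale)
  thus ?thesis
    unfolding symmetry_resolved_schmidt_decomposition_def s_def by fast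
qed

end
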